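(* The function $s \mapsto s\,\dfrac{\theta_4'(s)}{\theta_4(s)}$ is strictly decreasing on $(0,\infty)$.
   Context: For $s>0$, $\theta_4(s) = \sum_{k\in\mathbb{Z}} (-1)^k e^{-\pi k^2 s}$. *)

theory Defs
  imports "HOL-Analysis.Analysis"
begin

definition theta4 :: "real \<Rightarrow> real" where
  "theta4 s = (\<Sum>\<^sub>\<infinity>k::int. (-1) powi k * exp (- pi * (real_of_int k)\<^sup>2 * s))"

end

theory Submission
  imports Defs "HOL-Library.Nat_Bijection"
begin

text \<open>
  With \<open>x = exp (- pi * s)\<close>, Jacobi's triple product gives
  \<open>theta4 s = (\<Prod>n\<ge>1. (1 - x^(2n)) * (1 - x^(2n-1))^2)\<close>. We obtain it as the limit \<open>N \<rightarrow> \<infinity>\<close>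
  of the finite identity
  \<open>(\<Prod>i<N. 1 - x^(2i+1))^2 = (\<Sum>|n|\<le>N. (-1)^n * x^(n^2) * [2N, N+n])\<close>, \<open>[m, k]\<close> the Gaussian
  binomial coefficient in base \<open>x^2\<close>, which is Gauss's q-binomial theorem at \<open>z = x^(2N-1)\<close>,
  \<open>y = -1\<close>; Tannery's theorem justifies the limit. Taking logarithms and differentiating
  termwise, \<open>s * theta4' s / theta4 s\<close> becomes a series of terms \<open>c * B (pi * m * s)\<close> with
  \<open>c > 0\<close> and \<open>B y = y / (exp y - 1)\<close>, and \<open>B\<close> is strictly decreasing on \<open>(0, \<infinity>)\<close>.
\<close>

text \<open>\<open>qfact x n\<close> is the q-Pochhammer symbol \<open>(x^2; x^2)_n\<close> and \<open>qbinom\<close> the Gaussian binomial in base \<open>x^2\<close>.\<close>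

definition qfact :: "real \<Rightarrow> nat \<Rightarrow> real" where
  "qfact x n = (\<Prod>i<n. 1 - x ^ (2 * i + 2))"

definition qbinom :: "real \<Rightarrow> nat \<Rightarrow> nat \<Rightarrow> real" where
  "qbinom x m k = (if k \<le> m then qfact x m / (qfact x k * qfact x (m - k)) else 0)"

lemma qfact_0 [simp]: "qfact x 0 = 1"
  by (simp add: qfact_def)

lemma qfact_Suc: "qfact x (Suc n) = qfact x n * (1 - x ^ (2 * n + 2))"
  by (simp add: qfact_def)

lemma qfact_pos:
  assumes "0 < x" "x < 1"
  shows "0 < qfact x n"
  unfolding qfact_def using assms by (intro prod_pos) (auto simp: power_less_one_iff simp del: power_Suc)

lemma qbinom_0 [simp]: "0 < x \<Longrightarrow> x < 1 \<Longrightarrow> qbinom x m 0 = 1"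
  using qfact_pos[of x m] by (simp add: qbinom_def)

lemma qbinom_eq_0 [simp]: "m < k \<Longrightarrow> qbinom x m k = 0"
  by (simp add: qbinom_def)

lemma qbinom_Suc_Suc:
  assumes x: "0 < x" "x < 1" and "k \<le> m"
  shows "qbinom x (Suc m) (Suc k) = qbinom x m k + x ^ (2 * Suc k) * qbinom x m (Suc k)"
proof (cases "k = m")
  case True
  then show ?thesis using qfact_pos[OF x, of m] qfact_pos[OF x, of "Suc m"]
    by (simp add: qbinom_def)
next
  case False
  then obtain d where m: "m = k + Suc d" using \<open>k \<le> m\<close> by (metis add_Suc_right le_neq_implies_less less_imp_Suc_add)
  have pos: "0 < qfact x n" for n using qfact_pos[OF x] .
  have pw: "x ^ (2 * m + 2) = x ^ (2 * Suc k) * x ^ (2 * d + 2)"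
    unfolding m power_add[symmetric] by (simp add: algebra_simps)
  have split: "1 - x ^ (2 * m + 2) = (1 - x ^ (2 * Suc k)) + x ^ (2 * Suc k) * (1 - x ^ (2 * d + 2))"
    unfolding pw by (simp add: algebra_simps)
  have a: "0 < 1 - x ^ (2 * Suc k)" and b: "0 < 1 - x ^ (2 * d + 2)"
    using pos[of "Suc k"] pos[of "Suc d"] pos[of k] pos[of d] by (simp_all add: qfact_Suc zero_less_mult_iff)
  have frac_split: "P * (u + t * v) / ((A * u) * (B * v)) = P / (A * (B * v)) + t * (P / ((A * u) * B))"
    if "A \<noteq> 0" "B \<noteq> 0" "u \<noteq> 0" "v \<noteq> 0" for P A B u v t :: real
    using that by (simp add: field_simps)
  have "qbinom x (Suc m) (Suc k) = qfact x m * ((1 - x ^ (2 * Suc k)) + x ^ (2 * Suc k) * (1 - x ^ (2 * d + 2)))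
      / ((qfact x k * (1 - x ^ (2 * Suc k))) * (qfact x d * (1 - x ^ (2 * d + 2))))"
    unfolding qbinom_def split[symmetric] by (simp add: m qfact_Suc)
  also have "\<dots> = qfact x m / (qfact x k * (qfact x d * (1 - x ^ (2 * d + 2))))
      + x ^ (2 * Suc k) * (qfact x m / ((qfact x k * (1 - x ^ (2 * Suc k))) * qfact x d))"
    by (rule frac_split) (use pos[of k] pos[of d] a b in auto)
  also have "\<dots> = qbinom x m k + x ^ (2 * Suc k) * qbinom x m (Suc k)"
    unfolding qbinom_def by (simp add: m qfact_Suc)
  finally show ?thesis .
qed

lemma prod_qbinomial:
  assumes x: "0 < x" "x < 1"
  shows "(\<Prod>j<m. z + y * x ^ (2 * j)) = (\<Sum>k\<le>m. x ^ (k * (k - 1)) * qbinom x m k * y ^ k * z ^ (m - k))"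
proof (induction m arbitrary: y)
  case 0
  then show ?case using x by simp
next
  case (Suc m)
  \<comment> \<open>Split off the factor \<open>j = 0\<close>, use the hypothesis with \<open>y * x\<^sup>2\<close> for \<open>y\<close>, and recombine by Pascal's rule.\<close>
  define t where "t k = x ^ (k * (k - 1)) * qbinom x m k * (y * x\<^sup>2) ^ k * z ^ (m - k)" for k
  define S where "S = (\<Sum>k\<le>m. t k)"
  have tri: "Suc k * k = k * (k - 1) + 2 * k" for k :: nat
    by (cases k) (simp_all add: algebra_simps)
  have "(\<Prod>j<Suc m. z + y * x ^ (2 * j)) = (z + y) * (\<Prod>j<m. z + (y * x\<^sup>2) * x ^ (2 * j))"
    by (subst prod.lessThan_Suc_shift) (simp add: power_mult mult_ac power2_eq_square)
  also have "\<dots> = (z + y) * S" unfolding Suc.IH S_def t_def ..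
  finally have L: "(\<Prod>j<Suc m. z + y * x ^ (2 * j)) = z * S + y * S" by (simp add: algebra_simps)
  have zS: "z * S = z ^ Suc m + (\<Sum>k\<le>m. x ^ (Suc k * k + 2 * Suc k) * qbinom x m (Suc k) * y ^ Suc k * z ^ (m - k))"
  proof -
    have "z * S = (\<Sum>k\<le>Suc m. z * t k)" using x by (simp add: S_def sum_distrib_left t_def)
    also have "\<dots> = z * t 0 + (\<Sum>k\<le>m. z * t (Suc k))" by (rule sum.atMost_Suc_shift)
    also have "z * t 0 = z ^ Suc m" using x by (simp add: t_def)
    also have "(\<Sum>k\<le>m. z * t (Suc k)) = (\<Sum>k\<le>m. x ^ (Suc k * k + 2 * Suc k) * qbinom x m (Suc k) * y ^ Suc k * z ^ (m - k))"
    proof (rule sum.cong[OF refl])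
      fix k assume "k \<in> {..m}"
      then consider "k < m" | "k = m" by fastforce
      then show "z * t (Suc k) = x ^ (Suc k * k + 2 * Suc k) * qbinom x m (Suc k) * y ^ Suc k * z ^ (m - k)"
      proof cases
        case 1
        then have zz: "z ^ (m - k) = z * z ^ (m - Suc k)" by (metis Suc_diff_Suc power_Suc)
        have "(y * x\<^sup>2) ^ Suc k = y ^ Suc k * x ^ (2 * Suc k)"
          by (simp only: power_mult_distrib power_mult)
        then show ?thesis unfolding t_def zz diff_Suc_1 power_add by (simp only: mult_ac)
      qed (simp add: t_def)
    qed
    finally show ?thesis .
  qed
  have yS: "y * S = (\<Sum>k\<le>m. x ^ (Suc k * k) * qbinom x m k * y ^ Suc k * z ^ (m - k))"
    unfolding S_def sum_distrib_left t_def tri power_mult_distrib power_mult power_add power_Suc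
    by (simp only: mult_ac)
  have "(\<Sum>k\<le>Suc m. x ^ (k * (k - 1)) * qbinom x (Suc m) k * y ^ k * z ^ (Suc m - k))
     = z ^ Suc m + (\<Sum>k\<le>m. x ^ (Suc k * k) * qbinom x (Suc m) (Suc k) * y ^ Suc k * z ^ (m - k))"
    using x by (subst sum.atMost_Suc_shift) simp
  also have "(\<Sum>k\<le>m. x ^ (Suc k * k) * qbinom x (Suc m) (Suc k) * y ^ Suc k * z ^ (m - k))
     = (\<Sum>k\<le>m. x ^ (Suc k * k) * qbinom x m k * y ^ Suc k * z ^ (m - k)) +
       (\<Sum>k\<le>m. x ^ (Suc k * k + 2 * Suc k) * qbinom x m (Suc k) * y ^ Suc k * z ^ (m - k))"
    unfolding sum.distrib[symmetric]
    by (intro sum.cong refl) (simp only: qbinom_Suc_Suc[OF x] power_add distrib_left distrib_right mult_ac atMost_iff)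
  finally show ?case using L zS yS by simp
qed

definition odd_qfact :: "real \<Rightarrow> nat \<Rightarrow> real" where
  "odd_qfact x n = (\<Prod>i<n. 1 - x ^ (2 * i + 1))"

definition theta4_term :: "real \<Rightarrow> int \<Rightarrow> real" where
  "theta4_term x n = (-1) powi n * x ^ nat (n\<^sup>2)"

lemma prod_neg_power_even: "(\<Prod>j<N. - (x ^ (2 * j))) = (-1) ^ N * (x :: real) ^ (N * (N - 1))"
proof (induction N)
  case (Suc N)
  have "Suc N * (Suc N - 1) = N * (N - 1) + 2 * N" by (cases N) simp_all
  then show ?case unfolding prod.lessThan_Suc Suc.IH by (simp add: power_add mult_2 add_ac)
qed simp

lemma prod_lessThan_add: "(\<Prod>j<a + b :: nat. f j) = (\<Prod>j<a. f j) * (\<Prod>i<b. f (a + i) :: 'a :: comm_monoid_mult)"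
  by (induction b) (simp_all add: mult_ac)

lemma prod_diff_even_powers:
  assumes "N \<ge> 1"
  shows "(\<Prod>j<2 * N. x ^ (2 * N - 1) + (-1) * x ^ (2 * j))
    = (-1) ^ N * x ^ (N * (N - 1) + (2 * N - 1) * N) * odd_qfact x N ^ 2"
proof -
  have "(\<Prod>j<2 * N. x ^ (2 * N - 1) + (-1) * x ^ (2 * j))
      = (\<Prod>j<N. x ^ (2 * N - 1) - x ^ (2 * j)) * (\<Prod>i<N. x ^ (2 * N - 1) - x ^ (2 * (N + i)))"
    using prod_lessThan_add[of "\<lambda>j. x ^ (2 * N - 1) + (-1) * x ^ (2 * j)" N N] by (simp add: mult_2)
  also have "(\<Prod>j<N. x ^ (2 * N - 1) - x ^ (2 * j)) = (\<Prod>j<N. - (x ^ (2 * j)) * (1 - x ^ (2 * (N - Suc j) + 1)))"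
  proof (rule prod.cong[OF refl])
    fix j assume "j \<in> {..<N}"
    then have "2 * N - 1 = 2 * j + (2 * (N - Suc j) + 1)" by auto
    then have "x ^ (2 * N - 1) = x ^ (2 * j) * x ^ (2 * (N - Suc j) + 1)"
      by (simp only: power_add)
    then show "x ^ (2 * N - 1) - x ^ (2 * j) = - (x ^ (2 * j)) * (1 - x ^ (2 * (N - Suc j) + 1))"
      by (simp add: algebra_simps)
  qed
  also have "\<dots> = (-1) ^ N * x ^ (N * (N - 1)) * odd_qfact x N"
    unfolding prod.distrib prod_neg_power_even odd_qfact_def
    using prod.nat_diff_reindex[of "\<lambda>i. 1 - x ^ (2 * i + 1)" N] by simp
  also have "(\<Prod>i<N. x ^ (2 * N - 1) - x ^ (2 * (N + i))) = (\<Prod>i<N. x ^ (2 * N - 1) * (1 - x ^ (2 * i + 1)))"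
  proof (rule prod.cong[OF refl])
    fix i
    have "2 * (N + i) = (2 * N - 1) + (2 * i + 1)" using assms by simp
    then have "x ^ (2 * (N + i)) = x ^ (2 * N - 1) * x ^ (2 * i + 1)"
      by (simp only: power_add)
    then show "x ^ (2 * N - 1) - x ^ (2 * (N + i)) = x ^ (2 * N - 1) * (1 - x ^ (2 * i + 1))"
      by (simp add: algebra_simps)
  qed
  also have "\<dots> = x ^ ((2 * N - 1) * N) * odd_qfact x N"
    unfolding prod.distrib odd_qfact_def by (simp add: power_mult)
  finally show ?thesis by (simp add: power_add power2_eq_square mult_ac)
qed

lemma sum_atMost_double_shift:
  "(\<Sum>k\<le>2 * N. f (int k - int N)) = (\<Sum>n = - int N..int N. f n)"
  by (rule sum.reindex_bij_witness[where i = "\<lambda>n. nat (int N + n)" and j = "\<lambda>k. int k - int N"]) auto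

lemma qbinomial_summand_eq_theta4_term:
  assumes "N \<noteq> 0" "k \<le> 2 * N"
  shows "x ^ (k * (k - 1)) * qbinom x (2 * N) k * (-1) ^ k * (x ^ (2 * N - 1)) ^ (2 * N - k)
    = (-1) ^ N * x ^ (N * (N - 1) + (2 * N - 1) * N) * (theta4_term x (int k - int N) * qbinom x (2 * N) k)"
proof -
  have e1: "int (k * (k - 1)) = int k * (int k - 1)" by (cases k) (simp_all add: algebra_simps)
  have e2: "int ((2 * N - 1) * (2 * N - k)) = (2 * int N - 1) * (2 * int N - int k)"
    using assms by (simp add: of_nat_diff)
  have e3: "int (N * (N - 1) + (2 * N - 1) * N) = int N * (int N - 1) + (2 * int N - 1) * int N"
    using assms by (simp add: of_nat_diff)
  have e4: "int (nat ((int k - int N)\<^sup>2)) = (int k - int N)\<^sup>2" by simp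
  have "int (k * (k - 1) + (2 * N - 1) * (2 * N - k))
      = int (nat ((int k - int N)\<^sup>2) + (N * (N - 1) + (2 * N - 1) * N))"
    unfolding of_nat_add e1 e2 e3 e4 by (simp add: algebra_simps power2_eq_square)
  then have expo: "x ^ (k * (k - 1)) * (x ^ (2 * N - 1)) ^ (2 * N - k)
      = x ^ nat ((int k - int N)\<^sup>2) * x ^ (N * (N - 1) + (2 * N - 1) * N)"
    by (simp only: of_nat_eq_iff flip: power_mult power_add)
  have sign: "(-1 :: real) ^ k = (-1) ^ N * (-1) powi (int k - int N)"
    by (simp add: power_int_diff field_simps flip: power_add mult_2)
  have "x ^ (k * (k - 1)) * qbinom x (2 * N) k * (-1) ^ k * (x ^ (2 * N - 1)) ^ (2 * N - k)
      = (-1) ^ k * (x ^ (k * (k - 1)) * (x ^ (2 * N - 1)) ^ (2 * N - k)) * qbinom x (2 * N) k"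
    by (simp only: mult_ac)
  also have "\<dots> = (-1) ^ N * x ^ (N * (N - 1) + (2 * N - 1) * N) * (theta4_term x (int k - int N) * qbinom x (2 * N) k)"
    unfolding sign expo theta4_term_def by (simp only: mult_ac)
  finally show ?thesis .
qed

lemma odd_qfact_square_eq_sum:
  assumes x: "0 < x" "x < 1"
  shows "odd_qfact x N ^ 2 = (\<Sum>n = - int N..int N. theta4_term x n * qbinom x (2 * N) (nat (int N + n)))"
proof (cases "N = 0")
  case True
  then show ?thesis using x by (simp add: odd_qfact_def theta4_term_def)
next
  case False
  define C where "C = (-1) ^ N * x ^ (N * (N - 1) + (2 * N - 1) * N)"
  have "C \<noteq> 0" using x by (simp add: C_def)
  have "C * odd_qfact x N ^ 2 = (\<Prod>j<2 * N. x ^ (2 * N - 1) + (-1) * x ^ (2 * j))"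
    unfolding C_def using False by (intro prod_diff_even_powers[symmetric]) simp
  also have "\<dots> = C * (\<Sum>k\<le>2 * N. theta4_term x (int k - int N) * qbinom x (2 * N) k)"
    unfolding prod_qbinomial[OF x] sum_distrib_left C_def
    by (rule sum.cong[OF refl], rule qbinomial_summand_eq_theta4_term[OF False]) simp
  also have "(\<Sum>k\<le>2 * N. theta4_term x (int k - int N) * qbinom x (2 * N) k)
      = (\<Sum>n = - int N..int N. theta4_term x n * qbinom x (2 * N) (nat (int N + n)))"
    using sum_atMost_double_shift[of "\<lambda>n. theta4_term x n * qbinom x (2 * N) (nat (int N + n))" N] by simp
  finally have "C * odd_qfact x N ^ 2
      = C * (\<Sum>n = - int N..int N. theta4_term x n * qbinom x (2 * N) (nat (int N + n)))" .
  with \<open>C \<noteq> 0\<close> show ?thesis by (rule mult_left_cancel[THEN iffD1])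
qed

lemma abs_ln_one_minus_le:
  fixes t :: real
  assumes "0 \<le> t" "t < 1"
  shows "\<bar>ln (1 - t)\<bar> \<le> t / (1 - t)"
proof -
  have "- ln (1 - t) = ln (inverse (1 - t))"
    using assms by (simp add: ln_inverse)
  also have "\<dots> \<le> inverse (1 - t) - 1"
    using assms by (intro ln_le_minus_one) simp
  also have "\<dots> = t / (1 - t)"
    using assms by (simp add: field_simps)
  finally show ?thesis using assms by simp
qed

lemma summable_ln_one_minus_power:
  fixes x :: real
  assumes x: "0 < x" "x < 1" and f: "\<And>i. 0 < f i" "\<And>i. i \<le> f i"
  shows "summable (\<lambda>i. ln (1 - x ^ f i))"
proof (rule summable_comparison_test')
  show "summable (\<lambda>i. x ^ i / (1 - x))"
    using x by (intro summable_divide summable_geometric) simp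
  fix i
  have "x ^ f i \<le> x ^ 1" "x ^ f i \<le> x ^ i"
    using power_decreasing[of 1 "f i" x] power_decreasing[of i "f i" x] x f[of i] by auto
  moreover have "x ^ f i < 1"
    using x f[of i] by (simp add: power_less_one_iff)
  ultimately have "\<bar>ln (1 - x ^ f i)\<bar> \<le> x ^ f i / (1 - x ^ f i)"
    using x by (intro abs_ln_one_minus_le) auto
  also have "\<dots> \<le> x ^ i / (1 - x)"
    using \<open>x ^ f i \<le> x ^ 1\<close> \<open>x ^ f i \<le> x ^ i\<close> \<open>x ^ f i < 1\<close> x by (intro frac_le) auto
  finally show "norm (ln (1 - x ^ f i)) \<le> x ^ i / (1 - x)" by simp
qed

lemma prod_one_minus_power_eq_exp:
  fixes x :: real and f :: "nat \<Rightarrow> nat"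
  assumes "0 < x" "x < 1" "\<And>i. 0 < f i"
  shows "(\<Prod>i<n. 1 - x ^ f i) = exp (\<Sum>i<n. ln (1 - x ^ f i))"
  using assms by (simp add: exp_sum power_less_one_iff)

text \<open>The infinite products \<open>(x^2; x^2)_\<infinity>\<close> and \<open>(x; x^2)_\<infinity>\<close>, written through their logarithms.\<close>

definition qfact_inf :: "real \<Rightarrow> real" where
  "qfact_inf x = exp (\<Sum>i. ln (1 - x ^ (2 * i + 2)))"

definition odd_qfact_inf :: "real \<Rightarrow> real" where
  "odd_qfact_inf x = exp (\<Sum>i. ln (1 - x ^ (2 * i + 1)))"

lemma qfact_inf_pos: "0 < qfact_inf x"
  by (simp add: qfact_inf_def)

lemma qfact_eq_exp: "0 < x \<Longrightarrow> x < 1 \<Longrightarrow> qfact x n = exp (\<Sum>i<n. ln (1 - x ^ (2 * i + 2)))"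
  unfolding qfact_def by (rule prod_one_minus_power_eq_exp) auto

lemma odd_qfact_eq_exp: "0 < x \<Longrightarrow> x < 1 \<Longrightarrow> odd_qfact x n = exp (\<Sum>i<n. ln (1 - x ^ (2 * i + 1)))"
  unfolding odd_qfact_def by (rule prod_one_minus_power_eq_exp) auto

lemma qfact_tendsto:
  assumes x: "0 < x" "x < 1"
  shows "qfact x \<longlonglongrightarrow> qfact_inf x"
  unfolding qfact_eq_exp[OF x, abs_def] qfact_inf_def
  by (intro tendsto_exp summable_LIMSEQ summable_ln_one_minus_power x) auto

lemma odd_qfact_tendsto:
  assumes x: "0 < x" "x < 1"
  shows "odd_qfact x \<longlonglongrightarrow> odd_qfact_inf x"
  unfolding odd_qfact_eq_exp[OF x, abs_def] odd_qfact_inf_def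
  by (intro tendsto_exp summable_LIMSEQ summable_ln_one_minus_power x) auto

lemma qfact_bounds:
  assumes x: "0 < x" "x < 1"
  shows "qfact_inf x \<le> qfact x n" "qfact x n \<le> 1"
proof -
  have nonpos: "ln (1 - x ^ (2 * i + 2)) \<le> 0" for i
    using x power_less_one_iff[of x "2 * i + 2"] by (simp del: power_Suc)
  have "summable (\<lambda>i. ln (1 - x ^ (2 * i + 2)))"
    using x by (intro summable_ln_one_minus_power) auto
  then have "(\<Sum>i<n. - ln (1 - x ^ (2 * i + 2))) \<le> (\<Sum>i. - ln (1 - x ^ (2 * i + 2)))"
    using nonpos by (intro sum_le_suminf summable_minus) auto
  then have "(\<Sum>i. ln (1 - x ^ (2 * i + 2))) \<le> (\<Sum>i<n. ln (1 - x ^ (2 * i + 2)))"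
    using \<open>summable _\<close> by (simp add: suminf_minus sum_negf)
  then show "qfact_inf x \<le> qfact x n"
    unfolding qfact_eq_exp[OF x] qfact_inf_def by simp
  show "qfact x n \<le> 1"
    unfolding qfact_eq_exp[OF x] using nonpos by (simp add: sum_nonpos)
qed

lemma qbinom_bounds:
  assumes x: "0 < x" "x < 1"
  shows "0 \<le> qbinom x m k" "qbinom x m k \<le> 1 / qfact_inf x ^ 2"
proof -
  have pos: "0 < qfact x n" for n using qfact_pos[OF x] .
  show "0 \<le> qbinom x m k" unfolding qbinom_def using pos by (simp add: less_imp_le)
  have "qfact_inf x * qfact_inf x \<le> qfact x k * qfact x (m - k)"
    using qfact_bounds[OF x] qfact_inf_pos[of x] pos[of k] by (intro mult_mono) auto
  then have "qfact x m / (qfact x k * qfact x (m - k)) \<le> 1 / qfact_inf x ^ 2"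
    using qfact_bounds(2)[OF x, of m] pos[of m] qfact_inf_pos[of x]
    by (intro frac_le) (simp_all add: power2_eq_square)
  then show "qbinom x m k \<le> 1 / qfact_inf x ^ 2"
    unfolding qbinom_def using qfact_inf_pos[of x] by auto
qed

lemma filterlim_nat_add_int: "filterlim (\<lambda>N. nat (int N + j)) sequentially sequentially"
  unfolding filterlim_at_top eventually_sequentially
proof
  fix Z :: nat
  show "\<exists>N. \<forall>n\<ge>N. Z \<le> nat (int n + j)"
    by (rule exI[of _ "Z + nat \<bar>j\<bar>"]) auto
qed

lemma qbinom_central_tendsto:
  assumes x: "0 < x" "x < 1"
  shows "(\<lambda>N. qbinom x (2 * N) (nat (int N + n))) \<longlonglongrightarrow> 1 / qfact_inf x"
proof -
  let ?Q = "qfact_inf x"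
  have "(\<lambda>N. qfact x (2 * N) / (qfact x (nat (int N + n)) * qfact x (nat (int N + - n)))) \<longlonglongrightarrow> ?Q / (?Q * ?Q)"
    using qfact_inf_pos[of x]
    by (intro tendsto_intros filterlim_compose[OF qfact_tendsto[OF x]] filterlim_nat_add_int
        filterlim_subseq) (simp_all add: strict_mono_def)
  moreover have "\<forall>\<^sub>F N in sequentially. qfact x (2 * N) / (qfact x (nat (int N + n)) * qfact x (nat (int N + - n)))
      = qbinom x (2 * N) (nat (int N + n))"
    unfolding eventually_sequentially
  proof (intro exI[of _ "nat \<bar>n\<bar>"] allI impI)
    fix N assume "nat \<bar>n\<bar> \<le> N"
    then have "nat (int N + n) \<le> 2 * N" "2 * N - nat (int N + n) = nat (int N + - n)" by auto
    then show "qfact x (2 * N) / (qfact x (nat (int N + n)) * qfact x (nat (int N + - n)))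
        = qbinom x (2 * N) (nat (int N + n))"
      unfolding qbinom_def by simp
  qed
  ultimately show ?thesis using qfact_inf_pos[of x] by (auto intro: Lim_transform_eventually)
qed

lemma abs_theta4_term_le:
  assumes x: "0 < x" "x < 1"
  shows "\<bar>theta4_term x n\<bar> \<le> sqrt x ^ int_encode n"
proof -
  have sq: "nat (n\<^sup>2) = nat \<bar>n\<bar> ^ 2"
    using nat_power_eq[of "\<bar>n\<bar>" 2] by simp
  have "int_encode n \<le> 2 * nat \<bar>n\<bar>"
    unfolding int_encode_def sum_encode_def by (cases "0 \<le> n") simp_all
  also have "\<dots> \<le> 2 * nat (n\<^sup>2)"
    unfolding sq by (simp add: power2_eq_square le_square)
  finally have "sqrt x ^ (2 * nat (n\<^sup>2)) \<le> sqrt x ^ int_encode n"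
    using x by (intro power_decreasing) auto
  then show ?thesis
    using x by (simp add: theta4_term_def abs_mult power_abs power_mult)
qed

lemma summable_norm_theta4_term_decode:
  assumes x: "0 < x" "x < 1"
  shows "summable (\<lambda>k. norm (theta4_term x (int_decode k)))"
proof (rule summable_comparison_test')
  show "summable (\<lambda>k. sqrt x ^ k)" using x by (intro summable_geometric) simp
  show "norm (norm (theta4_term x (int_decode k))) \<le> sqrt x ^ k" for k
    using abs_theta4_term_le[OF x, of "int_decode k"] by simp
qed

lemma sum_int_interval_eq_suminf_decode:
  fixes f :: "int \<Rightarrow> real"
  shows "(\<Sum>n = - int N..int N. f n) = (\<Sum>k. if \<bar>int_decode k\<bar> \<le> int N then f (int_decode k) else 0)"
proof -
  let ?g = "\<lambda>k. if \<bar>int_decode k\<bar> \<le> int N then f (int_decode k) else 0"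
  have "(\<Sum>k. ?g k) = sum ?g (int_encode ` {- int N..int N})"
  proof (rule suminf_finite)
    fix k assume "k \<notin> int_encode ` {- int N..int N}"
    then have "int_decode k \<notin> {- int N..int N}"
      by (metis image_eqI int_decode_inverse)
    then show "?g k = 0" by auto
  qed simp
  also have "\<dots> = (\<Sum>n = - int N..int N. f n)"
    by (subst sum.reindex[OF inj_on_subset[OF inj_int_encode subset_UNIV]]) (auto intro!: sum.cong)
  finally show ?thesis ..
qed

text \<open>\<open>int_decode\<close> enumerates \<open>\<int>\<close> so that Tannery's theorem for \<open>nat\<close>-indexed series applies;
  the coefficients \<open>qbinom x (2 * N) (N + n)\<close> are uniformly bounded by \<open>1 / qfact_inf x ^ 2\<close>.\<close>

lemma odd_qfact_square_tendsto_suminf: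
  assumes x: "0 < x" "x < 1"
  shows "(\<lambda>N. odd_qfact x N ^ 2) \<longlonglongrightarrow> (\<Sum>k. theta4_term x (int_decode k)) / qfact_inf x"
proof -
  define Q where "Q = qfact_inf x"
  have Q: "0 < Q" unfolding Q_def by (rule qfact_inf_pos)
  define a where "a k N = (if \<bar>int_decode k\<bar> \<le> int N
    then theta4_term x (int_decode k) * qbinom x (2 * N) (nat (int N + int_decode k)) else 0)" for k N
  have lim: "(\<lambda>N. a k N) \<longlonglongrightarrow> theta4_term x (int_decode k) * (1 / Q)" for k
  proof -
    have "(\<lambda>N. theta4_term x (int_decode k) * qbinom x (2 * N) (nat (int N + int_decode k)))
        \<longlonglongrightarrow> theta4_term x (int_decode k) * (1 / Q)"
      unfolding Q_def by (intro tendsto_mult tendsto_const qbinom_central_tendsto x)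
    moreover have "\<forall>\<^sub>F N in sequentially. theta4_term x (int_decode k) * qbinom x (2 * N) (nat (int N + int_decode k)) = a k N"
      unfolding eventually_sequentially a_def by (intro exI[of _ "nat \<bar>int_decode k\<bar>"]) auto
    ultimately show ?thesis by (rule Lim_transform_eventually)
  qed
  have bound: "norm (a k N) \<le> sqrt x ^ k * (1 / Q\<^sup>2)" for k N
  proof -
    have "\<bar>theta4_term x (int_decode k)\<bar> * \<bar>qbinom x (2 * N) (nat (int N + int_decode k))\<bar> \<le> sqrt x ^ k * (1 / Q\<^sup>2)"
      unfolding Q_def using abs_theta4_term_le[OF x, of "int_decode k"] qbinom_bounds[OF x]
      by (intro mult_mono) auto
    then show ?thesis using Q x by (auto simp: a_def abs_mult)
  qed
  have "summable (\<lambda>k. sqrt x ^ k * (1 / Q\<^sup>2))"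
    using x by (intro summable_mult2 summable_geometric) simp
  moreover have "\<forall>\<^sub>F (k, N) in at_top \<times>\<^sub>F sequentially. norm (a k N) \<le> sqrt x ^ k * (1 / Q\<^sup>2)"
    by (intro always_eventually allI) (simp only: split_beta bound)
  ultimately have "(\<lambda>N. \<Sum>k. a k N) \<longlonglongrightarrow> (\<Sum>k. theta4_term x (int_decode k) * (1 / Q))"
    using tannerys_theorem[OF lim] by simp
  moreover have "(\<Sum>k. a k N) = odd_qfact x N ^ 2" for N
    unfolding a_def odd_qfact_square_eq_sum[OF x] sum_int_interval_eq_suminf_decode by simp
  ultimately show ?thesis
    using suminf_divide[OF summable_norm_cancel[OF summable_norm_theta4_term_decode[OF x]], of Q]
    unfolding Q_def by simp
qed

lemma suminf_theta4_term_decode: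
  assumes x: "0 < x" "x < 1"
  shows "(\<Sum>k. theta4_term x (int_decode k)) = qfact_inf x * odd_qfact_inf x ^ 2"
proof -
  have "(\<lambda>N. odd_qfact x N ^ 2) \<longlonglongrightarrow> odd_qfact_inf x ^ 2"
    by (intro tendsto_power odd_qfact_tendsto x)
  with odd_qfact_square_tendsto_suminf[OF x]
  have "(\<Sum>k. theta4_term x (int_decode k)) / qfact_inf x = odd_qfact_inf x ^ 2"
    by (rule LIMSEQ_unique)
  then have "(\<Sum>k. theta4_term x (int_decode k)) = odd_qfact_inf x ^ 2 * qfact_inf x"
    using qfact_inf_pos[of x] by (simp add: divide_eq_eq)
  then show ?thesis by (simp only: mult.commute)
qed

theorem has_sum_theta4_term:
  assumes x: "0 < x" "x < 1"
  shows "(theta4_term x has_sum qfact_inf x * odd_qfact_inf x ^ 2) UNIV"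
proof -
  have "(\<lambda>k. theta4_term x (int_decode k)) sums (qfact_inf x * odd_qfact_inf x ^ 2)"
    using summable_norm_cancel[OF summable_norm_theta4_term_decode[OF x]] suminf_theta4_term_decode[OF x]
    by (simp add: sums_iff)
  from norm_summable_imp_has_sum[OF summable_norm_theta4_term_decode[OF x] this]
  have "((theta4_term x \<circ> int_decode) has_sum qfact_inf x * odd_qfact_inf x ^ 2) UNIV"
    by (simp add: comp_def)
  then have "(theta4_term x has_sum qfact_inf x * odd_qfact_inf x ^ 2) (range int_decode)"
    by (subst has_sum_reindex) (simp_all add: inj_int_decode)
  then show ?thesis
    by (simp only: surj_int_decode)
qed

definition bernoulli_gf :: "real \<Rightarrow> real" where
  "bernoulli_gf y = y / (exp y - 1)"

lemma bernoulli_gf_pos: "0 < y \<Longrightarrow> 0 < bernoulli_gf y"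
  by (simp add: bernoulli_gf_def)

lemma bernoulli_gf_strict_antimono: "strict_antimono_on {0<..} bernoulli_gf"
proof (rule monotone_onI)
  fix a b :: real assume "a \<in> {0<..}" "b \<in> {0<..}" "a < b"
  show "bernoulli_gf a > bernoulli_gf b"
  proof (rule DERIV_neg_imp_decreasing[OF \<open>a < b\<close>])
    fix y assume "a \<le> y" "y \<le> b"
    with \<open>a \<in> {0<..}\<close> have "0 < y" by simp
    have "(bernoulli_gf has_real_derivative ((exp y - 1) - y * exp y) / (exp y - 1)\<^sup>2) (at y)"
      unfolding bernoulli_gf_def[abs_def] using \<open>0 < y\<close>
      by (auto intro!: derivative_eq_intros simp: power2_eq_square)
    moreover have "(exp y - 1) - y * exp y < 0"
      using exp_minus_greater[of y] \<open>0 < y\<close> by (simp add: exp_minus field_simps)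
    ultimately show "\<exists>d. (bernoulli_gf has_real_derivative d) (at y) \<and> d < 0"
      using \<open>0 < y\<close> by (intro exI conjI) (auto simp: divide_neg_pos)
  qed
qed

lemma bernoulli_gf_antimono: "0 < a \<Longrightarrow> a \<le> b \<Longrightarrow> bernoulli_gf b \<le> bernoulli_gf a"
  using monotone_onD[OF bernoulli_gf_strict_antimono, of a b] by (cases "a = b") auto

lemma bernoulli_gf_le:
  assumes "0 < y"
  shows "bernoulli_gf y \<le> 27 / y\<^sup>2"
proof -
  have "(1 + y / 3) ^ 3 \<le> exp (y / 3) ^ 3"
    using assms by (intro power_mono exp_ge_add_one_self) simp
  also have "\<dots> = exp y"
    by (simp flip: exp_of_nat_mult)
  moreover have "(1 + y / 3) ^ 3 = 1 + y ^ 3 / 27 + (y + y\<^sup>2 / 3)"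
    by (simp add: power3_eq_cube power2_eq_square field_simps)
  moreover have "0 \<le> y + y\<^sup>2 / 3"
    using assms by simp
  ultimately have "y ^ 3 / 27 \<le> exp y - 1"
    by linarith
  moreover have "0 < y ^ 3 / 27" using assms by simp
  ultimately have "bernoulli_gf y \<le> y / (y ^ 3 / 27)"
    unfolding bernoulli_gf_def using assms by (intro divide_left_mono) auto
  also have "\<dots> = 27 / y\<^sup>2"
    using assms by (simp add: power2_eq_square power3_eq_cube)
  finally show ?thesis .
qed

lemma summable_bernoulli_gf:
  assumes "0 < c"
  shows "summable (\<lambda>n. bernoulli_gf (c * real n))"
proof (rule summable_comparison_test'[where N = 1])
  show "summable (\<lambda>n. 27 / c\<^sup>2 * inverse (real n ^ 2))"
    by (intro summable_mult inverse_power_summable) simp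
  fix n :: nat assume "1 \<le> n"
  then have "0 < c * real n" using assms by simp
  then show "norm (bernoulli_gf (c * real n)) \<le> 27 / c\<^sup>2 * inverse (real n ^ 2)"
    using bernoulli_gf_le[of "c * real n"] bernoulli_gf_pos[of "c * real n"]
    by (simp add: power_mult_distrib field_simps)
qed

lemma has_real_derivative_ln_one_minus_exp:
  assumes "0 < a" "0 < s"
  shows "((\<lambda>s. ln (1 - exp (- (a * s)))) has_real_derivative bernoulli_gf (a * s) / s) (at s)"
proof -
  have "exp (- (a * s)) < 1" using assms by simp
  then have "((\<lambda>s. ln (1 - exp (- (a * s)))) has_real_derivative
      exp (- (a * s)) * a / (1 - exp (- (a * s)))) (at s)"
    by (auto intro!: derivative_eq_intros simp: field_simps)
  moreover have "exp (- (a * s)) * a / (1 - exp (- (a * s))) = bernoulli_gf (a * s) / s"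
    using assms by (simp add: bernoulli_gf_def exp_minus field_simps)
  ultimately show ?thesis by simp
qed

definition theta4_log_term :: "nat \<Rightarrow> real \<Rightarrow> real" where
  "theta4_log_term i s = ln (1 - exp (- (pi * real (2 * i + 2) * s))) + 2 * ln (1 - exp (- (pi * real (2 * i + 1) * s)))"

definition theta4_ratio_term :: "nat \<Rightarrow> real \<Rightarrow> real" where
  "theta4_ratio_term i s = bernoulli_gf (pi * real (2 * i + 2) * s) + 2 * bernoulli_gf (pi * real (2 * i + 1) * s)"

lemma exp_minus_pi_power: "exp (- pi * s) ^ m = exp (- (pi * real m * s))"
  by (simp flip: exp_of_nat_mult add: mult_ac)

lemma theta4_log_term_eq:
  "theta4_log_term i s = ln (1 - exp (- pi * s) ^ (2 * i + 2)) + 2 * ln (1 - exp (- pi * s) ^ (2 * i + 1))"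
  unfolding theta4_log_term_def exp_minus_pi_power ..

lemma summable_ln_theta4_factors:
  assumes "0 < s"
  shows "summable (\<lambda>i. ln (1 - exp (- pi * s) ^ (2 * i + 2)))" "summable (\<lambda>i. ln (1 - exp (- pi * s) ^ (2 * i + 1)))"
  by (intro summable_ln_one_minus_power; use assms in simp)+

lemma summable_theta4_log_term: "0 < s \<Longrightarrow> summable (\<lambda>i. theta4_log_term i s)"
  unfolding theta4_log_term_eq by (intro summable_add summable_mult summable_ln_theta4_factors)

lemma theta4_eq_exp_suminf:
  assumes "0 < s"
  shows "theta4 s = exp (\<Sum>i. theta4_log_term i s)"
proof -
  define x where "x = exp (- pi * s)"
  have x: "0 < x" "x < 1" unfolding x_def using assms by auto
  have "exp (- pi * (real_of_int n)\<^sup>2 * s) = x ^ nat (n\<^sup>2)" for n :: int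
    unfolding x_def exp_minus_pi_power by (simp add: mult_ac)
  then have "theta4 s = infsum (theta4_term x) UNIV"
    unfolding theta4_def theta4_term_def by simp
  also have "\<dots> = qfact_inf x * odd_qfact_inf x ^ 2"
    by (rule infsumI[OF has_sum_theta4_term[OF x]])
  also have "\<dots> = exp ((\<Sum>i. ln (1 - x ^ (2 * i + 2))) + 2 * (\<Sum>i. ln (1 - x ^ (2 * i + 1))))"
    unfolding qfact_inf_def odd_qfact_inf_def exp_add by (simp flip: exp_of_nat_mult)
  also have "(\<Sum>i. ln (1 - x ^ (2 * i + 2))) + 2 * (\<Sum>i. ln (1 - x ^ (2 * i + 1))) = (\<Sum>i. theta4_log_term i s)"
    using summable_ln_theta4_factors[OF assms] unfolding theta4_log_term_eq x_def
    by (simp only: suminf_add[symmetric] suminf_mult[symmetric] summable_mult)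
  finally show ?thesis .
qed

lemma theta4_ratio_term_strict_antimono:
  assumes "0 < s" "s < t"
  shows "theta4_ratio_term i t < theta4_ratio_term i s"
proof -
  have "bernoulli_gf (pi * real m * t) < bernoulli_gf (pi * real m * s)" if "0 < m" for m
    using assms that by (intro monotone_onD[OF bernoulli_gf_strict_antimono]) auto
  from this[of "2 * i + 2"] this[of "2 * i + 1"] show ?thesis
    unfolding theta4_ratio_term_def by simp
qed

lemma theta4_ratio_term_antimono: "0 < s \<Longrightarrow> s \<le> t \<Longrightarrow> theta4_ratio_term i t \<le> theta4_ratio_term i s"
  using theta4_ratio_term_strict_antimono[of s t i] by (cases "s = t") auto

lemma theta4_ratio_term_pos: "0 < s \<Longrightarrow> 0 < theta4_ratio_term i s"
  unfolding theta4_ratio_term_def by (intro add_pos_pos mult_pos_pos bernoulli_gf_pos) auto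

lemma summable_theta4_ratio_term:
  assumes "0 < s"
  shows "summable (\<lambda>i. theta4_ratio_term i s)"
proof (rule summable_comparison_test')
  have "summable (\<lambda>n. bernoulli_gf (pi * s * real (Suc n)))"
    using summable_bernoulli_gf[of "pi * s"] assms by (subst summable_Suc_iff) simp
  then show "summable (\<lambda>i. 3 * bernoulli_gf (pi * s * real (Suc i)))"
    by (rule summable_mult)
  fix i
  have le: "bernoulli_gf (pi * real m * s) \<le> bernoulli_gf (pi * s * real (Suc i))" if "Suc i \<le> m" for m
    using assms that by (intro bernoulli_gf_antimono) (auto simp: mult_ac)
  have "norm (theta4_ratio_term i s) = theta4_ratio_term i s"
    using theta4_ratio_term_pos[OF assms, of i] by simp
  also have "\<dots> \<le> 3 * bernoulli_gf (pi * s * real (Suc i))"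
    using le[of "2 * i + 2"] le[of "2 * i + 1"] unfolding theta4_ratio_term_def by simp
  finally show "norm (theta4_ratio_term i s) \<le> 3 * bernoulli_gf (pi * s * real (Suc i))" .
qed

lemma has_real_derivative_theta4_log_term:
  assumes "0 < s"
  shows "(theta4_log_term i has_real_derivative theta4_ratio_term i s / s) (at s)"
proof -
  have d: "((\<lambda>s. ln (1 - exp (- (pi * real m * s)))) has_real_derivative bernoulli_gf (pi * real m * s) / s) (at s)"
    if "0 < m" for m
    using assms that by (intro has_real_derivative_ln_one_minus_exp) auto
  have "(theta4_log_term i has_real_derivative
      bernoulli_gf (pi * real (2 * i + 2) * s) / s + 2 * (bernoulli_gf (pi * real (2 * i + 1) * s) / s)) (at s)"
    unfolding theta4_log_term_def[abs_def] by (intro DERIV_add DERIV_cmult d) simp_all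
  then show ?thesis
    by (simp add: theta4_ratio_term_def add_divide_distrib)
qed

lemma has_real_derivative_suminf_theta4_log_term:
  assumes "0 < s"
  shows "((\<lambda>s. \<Sum>i. theta4_log_term i s) has_real_derivative (\<Sum>i. theta4_ratio_term i s / s)) (at s)"
proof (rule has_field_derivative_series'(2))
  let ?S = "{s / 2..2 * s}"
  show "convex ?S" by (rule convex_real_interval)
  show "s \<in> ?S" "s \<in> interior ?S" using assms by simp_all
  show "(theta4_log_term i has_real_derivative theta4_ratio_term i t / t) (at t within ?S)" if "t \<in> ?S" for i t
  proof -
    from that assms have "0 < t" by simp
    then show ?thesis by (rule has_field_derivative_at_within[OF has_real_derivative_theta4_log_term])
  qed
  show "uniformly_convergent_on ?S (\<lambda>n t. \<Sum>i<n. theta4_ratio_term i t / t)"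
  proof (rule Weierstrass_m_test')
    show "summable (\<lambda>i. theta4_ratio_term i (s / 2) / (s / 2))"
      using assms by (intro summable_divide summable_theta4_ratio_term) simp
    fix i t assume "t \<in> ?S"
    then have "0 < s / 2" "s / 2 \<le> t" using assms by simp_all
    have "norm (theta4_ratio_term i t / t) = theta4_ratio_term i t / t"
      using theta4_ratio_term_pos[of t i] \<open>0 < s / 2\<close> \<open>s / 2 \<le> t\<close> by simp
    also have "\<dots> \<le> theta4_ratio_term i (s / 2) / (s / 2)"
      using theta4_ratio_term_antimono[OF \<open>0 < s / 2\<close> \<open>s / 2 \<le> t\<close>] theta4_ratio_term_pos[of "s / 2" i]
        \<open>0 < s / 2\<close> \<open>s / 2 \<le> t\<close> by (intro frac_le) simp_all
    finally show "norm (theta4_ratio_term i t / t) \<le> theta4_ratio_term i (s / 2) / (s / 2)" .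
  qed
  show "summable (\<lambda>i. theta4_log_term i s)"
    using assms by (rule summable_theta4_log_term)
qed

lemma theta4_log_derivative:
  assumes "0 < s"
  shows "s * deriv theta4 s / theta4 s = (\<Sum>i. theta4_ratio_term i s)"
proof -
  let ?G = "\<lambda>s. \<Sum>i. theta4_log_term i s"
  have "((\<lambda>s. exp (?G s)) has_real_derivative exp (?G s) * (\<Sum>i. theta4_ratio_term i s / s)) (at s)"
    using assms by (intro DERIV_fun_exp has_real_derivative_suminf_theta4_log_term)
  then have "(theta4 has_real_derivative exp (?G s) * (\<Sum>i. theta4_ratio_term i s / s)) (at s)"
    by (rule has_field_derivative_transform_within_open[where S = "{0<..}"])
      (use assms theta4_eq_exp_suminf in auto)
  then have "deriv theta4 s = theta4 s * ((\<Sum>i. theta4_ratio_term i s) / s)"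
    using assms by (simp add: DERIV_imp_deriv theta4_eq_exp_suminf suminf_divide summable_theta4_ratio_term)
  then show ?thesis
    using assms by (simp add: theta4_eq_exp_suminf)
qed

lemma strict_antimono_suminf_theta4_ratio_term:
  "strict_antimono_on {0<..} (\<lambda>s. \<Sum>i. theta4_ratio_term i s)"
proof (rule monotone_onI)
  fix s t :: real assume "s \<in> {0<..}" "t \<in> {0<..}" "s < t"
  then have "0 < s" "0 < t" by simp_all
  have "0 < (\<Sum>i. theta4_ratio_term i s - theta4_ratio_term i t)"
    using \<open>0 < s\<close> \<open>0 < t\<close> \<open>s < t\<close>
    by (intro suminf_pos summable_diff summable_theta4_ratio_term)
      (auto simp: theta4_ratio_term_strict_antimono)
  also have "\<dots> = (\<Sum>i. theta4_ratio_term i s) - (\<Sum>i. theta4_ratio_term i t)"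
    using \<open>0 < s\<close> \<open>0 < t\<close> by (intro suminf_diff[symmetric] summable_theta4_ratio_term)
  finally show "(\<Sum>i. theta4_ratio_term i s) > (\<Sum>i. theta4_ratio_term i t)"
    by simp
qed

theorem mainTheorem12:
  shows "strict_antimono_on {0<..} (\<lambda>s. s * deriv theta4 s / theta4 s)"
proof (rule monotone_onI)
  fix s t :: real assume "s \<in> {0<..}" "t \<in> {0<..}" "s < t"
  then show "s * deriv theta4 s / theta4 s > t * deriv theta4 t / theta4 t"
    using monotone_onD[OF strict_antimono_suminf_theta4_ratio_term] by (simp add: theta4_log_derivative)
qed

end
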